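(* Let $g:\mathbb{R}^2\to\mathbb{R}$, $g(x,y) = \bigl((x+1)^2+y^2\bigr)\bigl((x-1)^2+y^2\bigr)$, let $D=g^{-1}[0,2]$ (a 2-disk) and $f=g|_D:D\to\mathbb{R}$. Let $A=f^{-1}[0,0.5]$, which has two connected components $A_1\ni(-1,0)$ and $A_2\ni(1,0)$. Let $h:D\to D$, $h(x,y)=(-x,-y)$. Let $\omega$ be any volume form on $D$ such that $\mathrm{Vol}_\omega(A_1)\neq\mathrm{Vol}_\omega(A_2)$. Then the isotopy class $[h]\in\pi_0\mathcal{S}^+(f)$ does not contain any $k\in\mathcal{S}(f,\omega)$. Hence for such $\omega$ the map $j_0:\pi_0\mathcal{S}(f,\omega)\to\pi_0\mathcal{S}^+(f)$ induced by inclusion is not surjective.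
   Context: $\mathcal{S}(f)=\{h\in\mathrm{Diff}(D)\mid f\circ h=f\}$, $\mathcal{S}^+(f)$ is its subgroup of orientation-preserving diffeomorphisms, and $\mathcal{S}(f,\omega)$ is the subgroup of $h\in\mathcal{S}(f)$ with $h^*\omega=\omega$; these carry the $C^\infty$ topology and $\pi_0$ denotes the set of path components. Note $h\in\mathcal{S}^+(f)$ and $h(A_1)=A_2$. *)

theory Defs
  imports "HOL-Analysis.Analysis"
begin

definition g :: "real \<times> real \<Rightarrow> real" where
  "g p = (((fst p + 1)^2 + (snd p)^2) * ((fst p - 1)^2 + (snd p)^2))"

definition D :: "(real \<times> real) set" where
  "D = {p. 0 \<le> g p \<and> g p \<le> 2}"

definition f :: "real \<times> real \<Rightarrow> real" where
  "f p = g p"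

definition A :: "(real \<times> real) set" where
  "A = {p \<in> D. 0 \<le> f p \<and> f p \<le> 1/2}"

definition A1 :: "(real \<times> real) set" where
  "A1 = connected_component_set A (-1, 0)"

definition A2 :: "(real \<times> real) set" where
  "A2 = connected_component_set A (1, 0)"

definition hrot :: "real \<times> real \<Rightarrow> real \<times> real" where
  "hrot p = (- fst p, - snd p)"

definition dir :: "bool \<Rightarrow> real \<times> real" where
  "dir b = (if b then (0, 1) else (1, 0))"

definition partial :: "bool \<Rightarrow> (real \<times> real \<Rightarrow> 'b::real_normed_vector) \<Rightarrow> real \<times> real \<Rightarrow> 'b" where
  "partial b F p = vector_derivative (\<lambda>t. F (p + t *\<^sub>R dir b)) (at 0)"

fun iter_partial :: "bool list \<Rightarrow> (real \<times> real \<Rightarrow> 'b::real_normed_vector) \<Rightarrow> real \<times> real \<Rightarrow> 'b" where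
  "iter_partial [] F = F"
| "iter_partial (b # bs) F = partial b (iter_partial bs F)"

definition smooth_on_open :: "(real \<times> real) set \<Rightarrow> (real \<times> real \<Rightarrow> 'b::real_normed_vector) \<Rightarrow> bool" where
  "smooth_on_open U F \<longleftrightarrow> open U \<and>
     (\<forall>\<alpha>. continuous_on U (iter_partial \<alpha> F) \<and>
        (\<forall>b. \<forall>p\<in>U. (\<lambda>t. iter_partial \<alpha> F (p + t *\<^sub>R dir b)) differentiable (at 0)))"

definition smooth_on_D :: "(real \<times> real \<Rightarrow> 'b::real_normed_vector) \<Rightarrow> bool" where
  "smooth_on_D F \<longleftrightarrow> (\<exists>U. D \<subseteq> U \<and> smooth_on_open U F)"

(* Diff(D), elements represented by (arbitrary) extensions to the plane *)
definition Diff_D :: "(real \<times> real \<Rightarrow> real \<times> real) set" where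
  "Diff_D = {h. smooth_on_D h \<and> (\<forall>p\<in>D. h p \<in> D) \<and>
     (\<exists>k. smooth_on_D k \<and> (\<forall>p\<in>D. k p \<in> D \<and> k (h p) = p \<and> h (k p) = p))}"

definition jac :: "(real \<times> real \<Rightarrow> real \<times> real) \<Rightarrow> real \<times> real \<Rightarrow> real" where
  "jac h p = fst (partial False h p) * snd (partial True h p)
           - fst (partial True h p) * snd (partial False h p)"

definition S_f :: "(real \<times> real \<Rightarrow> real \<times> real) set" where
  "S_f = {h \<in> Diff_D. \<forall>p\<in>D. f (h p) = f p}"

definition S_plus :: "(real \<times> real \<Rightarrow> real \<times> real) set" where
  "S_plus = {h \<in> S_f. \<forall>p\<in>D. jac h p > 0}"

(* a volume form \<omega> = \<rho> dx\<and>dy on D *)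
definition volume_form :: "(real \<times> real \<Rightarrow> real) \<Rightarrow> bool" where
  "volume_form \<rho> \<longleftrightarrow> smooth_on_D \<rho> \<and> (\<forall>p\<in>D. \<rho> p \<noteq> 0)"

(* S(f,\<omega>): h^* \<omega> = \<omega>, i.e. \<rho>(h p) * det Dh(p) = \<rho>(p) *)
definition S_f_omega :: "(real \<times> real \<Rightarrow> real) \<Rightarrow> (real \<times> real \<Rightarrow> real \<times> real) set" where
  "S_f_omega \<rho> = {h \<in> S_f. \<forall>p\<in>D. \<rho> (h p) * jac h p = \<rho> p}"

definition vol :: "(real \<times> real \<Rightarrow> real) \<Rightarrow> (real \<times> real) set \<Rightarrow> real" where
  "vol \<rho> X = integral X \<rho>"

(* h and k lie in the same path component of S^+(f) with the C^\<infinity> topology: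
   a path t \<mapsto> H t in S^+(f), all of whose spatial derivatives are jointly
   continuous on [0,1] \<times> D (D compact, so this is continuity into C^\<infinity>(D,D)). *)
definition same_component_S_plus :: "(real \<times> real \<Rightarrow> real \<times> real) \<Rightarrow> (real \<times> real \<Rightarrow> real \<times> real) \<Rightarrow> bool" where
  "same_component_S_plus h k \<longleftrightarrow>
     (\<exists>H :: real \<Rightarrow> real \<times> real \<Rightarrow> real \<times> real.
        (\<forall>t\<in>{0..1}. H t \<in> S_plus) \<and>
        (\<forall>p\<in>D. H 0 p = h p \<and> H 1 p = k p) \<and>
        (\<forall>\<alpha>. continuous_on ({0..1} \<times> D) (\<lambda>(t, p). iter_partial \<alpha> (H t) p)))"

end

theory Submission
  imports Defs
begin

text \<open>
  An isotopy \<open>H\<close> in \<open>S\<^sup>+(f)\<close> from \<open>hrot\<close> to \<open>k\<close> moves the point \<open>(-1,0)\<close> along a path inside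
  \<open>A = f\<^sup>-\<^sup>1[0,1/2]\<close> that starts at \<open>hrot (-1,0) = (1,0)\<close>; hence \<open>k (-1,0) \<in> A\<^sub>2\<close>, and since \<open>k\<close>
  preserves \<open>f\<close> it maps the component \<open>A\<^sub>1\<close> onto \<open>A\<^sub>2\<close>. The density \<open>\<rho>\<close> of \<open>\<omega>\<close> vanishes nowhere,
  so it has one sign on the connected set \<open>A\<^sub>1 \<union> [(-1,0),(1,0)] \<union> A\<^sub>2 \<subseteq> D\<close>. If moreover
  \<open>k\<^sup>*\<omega> = \<omega>\<close>, i.e. \<open>\<rho> \<circ> k \<cdot> jac k = \<rho>\<close>, then \<open>jac k > 0\<close> on \<open>A\<^sub>1\<close> and the change of variables
  formula gives \<open>Vol\<^sub>\<omega>(A\<^sub>1) = Vol\<^sub>\<omega>(A\<^sub>2)\<close>.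
\<close>

section \<open>Smooth maps of the plane are differentiable\<close>

lemma smooth_on_open_continuous_on:
  assumes "smooth_on_open U F"
  shows "continuous_on U F"
  using assms unfolding smooth_on_open_def by (metis iter_partial.simps(1))

lemma smooth_on_open_continuous_on_partial:
  assumes "smooth_on_open U F"
  shows "continuous_on U (partial b F)"
  using assms unfolding smooth_on_open_def by (metis iter_partial.simps)

lemma smooth_on_D_continuous_on:
  assumes "smooth_on_D F"
  shows "continuous_on D F"
  using assms smooth_on_open_continuous_on continuous_on_subset
  unfolding smooth_on_D_def by blast

lemma smooth_on_open_has_vector_derivative_partial:
  assumes "smooth_on_open U F" "p \<in> U"
  shows "((\<lambda>t. F (p + t *\<^sub>R dir b)) has_vector_derivative partial b F p) (at 0)"
proof -
  have "(\<lambda>t. iter_partial [] F (p + t *\<^sub>R dir b)) differentiable (at 0)"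
    using assms unfolding smooth_on_open_def by blast
  then show ?thesis unfolding partial_def by (simp add: vector_derivative_works)
qed

lemma has_vector_derivative_at_from_shift:
  fixes \<phi> :: "real \<Rightarrow> 'b::real_normed_vector"
  assumes "((\<lambda>t. \<phi> (a + t)) has_vector_derivative v) (at 0)"
  shows "(\<phi> has_vector_derivative v) (at a)"
proof -
  have "((\<lambda>s. s - a) has_vector_derivative 1) (at a)"
    by (auto intro!: derivative_eq_intros)
  from vector_diff_chain_at[OF this] assms
  have "((\<lambda>t. \<phi> (a + t)) \<circ> (\<lambda>s. s - a) has_vector_derivative 1 *\<^sub>R v) (at a)" by simp
  then show ?thesis by (simp add: o_def)
qed

lemma smooth_on_open_has_derivative_fst:
  assumes "smooth_on_open U F" "(x, y) \<in> U"
  shows "((\<lambda>s. F (s, y)) has_derivative (\<lambda>t. t *\<^sub>R partial False F (x, y))) (at x)"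
  using has_vector_derivative_at_from_shift[of "\<lambda>s. F (s, y)"]
    smooth_on_open_has_vector_derivative_partial[OF assms, of False]
  by (simp add: dir_def has_vector_derivative_def)

lemma smooth_on_open_has_derivative_snd:
  assumes "smooth_on_open U F" "(x, y) \<in> U"
  shows "((\<lambda>s. F (x, s)) has_derivative (\<lambda>t. t *\<^sub>R partial True F (x, y))) (at y)"
  using has_vector_derivative_at_from_shift[of "\<lambda>s. F (x, s)"]
    smooth_on_open_has_vector_derivative_partial[OF assms, of True]
  by (simp add: dir_def has_vector_derivative_def)

definition differential :: "(real \<times> real \<Rightarrow> 'b::real_normed_vector) \<Rightarrow> real \<times> real \<Rightarrow> real \<times> real \<Rightarrow> 'b"
  where "differential F p q = fst q *\<^sub>R partial False F p + snd q *\<^sub>R partial True F p"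

lemma smooth_on_open_has_derivative:
  fixes F :: "real \<times> real \<Rightarrow> 'b::real_normed_vector"
  assumes sm: "smooth_on_open U F" and "p \<in> U"
  shows "(F has_derivative differential F p) (at p)"
proof -
  obtain x0 y0 where p: "p = (x0, y0)" by (cases p)
  have "open U" using sm by (simp add: smooth_on_open_def)
  then obtain X Y' where X: "open X" "x0 \<in> X" and Y': "open Y'" "y0 \<in> Y'" and XY': "X \<times> Y' \<subseteq> U"
    using \<open>p \<in> U\<close> p by (metis open_prod_elim mem_Sigma_iff)
  obtain e where "e > 0" and "ball y0 e \<subseteq> Y'" using Y' open_contains_ball by blast
  define Y where "Y = ball y0 e"
  have XY: "(x, y) \<in> U" if "x \<in> X" "y \<in> Y" for x y
    using that XY' \<open>ball y0 e \<subseteq> Y'\<close> Y_def by blast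
  have fx: "((\<lambda>x. F (x, y0)) has_derivative (\<lambda>t. t *\<^sub>R partial False F (x0, y0))) (at x0 within X)"
    using smooth_on_open_has_derivative_fst[OF sm] \<open>p \<in> U\<close> p has_derivative_at_withinI by blast
  have fy: "((\<lambda>y. F (x, y)) has_derivative blinfun_apply (blinfun_scaleR_left (partial True F (x, y))))
      (at y within Y)" if "x \<in> X" "y \<in> Y" for x y
    using smooth_on_open_has_derivative_snd[OF sm XY[OF that]] has_derivative_at_withinI by simp
  have "continuous (at p) (partial True F)"
    using smooth_on_open_continuous_on_partial[OF sm] \<open>open U\<close> \<open>p \<in> U\<close>
    by (simp add: continuous_on_eq_continuous_at)
  then have "continuous (at p) (\<lambda>q. blinfun_scaleR_left (partial True F q))"
    by (rule bounded_linear.continuous[OF bounded_linear_blinfun_scaleR_left])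
  then have fyc: "continuous (at (x0, y0) within X \<times> Y)
      (\<lambda>(x, y). blinfun_scaleR_left (partial True F (x, y)))"
    by (simp add: p split_def continuous_at_imp_continuous_within)
  have "((\<lambda>(x, y). F (x, y)) has_derivative
      (\<lambda>(tx, ty). tx *\<^sub>R partial False F (x0, y0) + blinfun_scaleR_left (partial True F (x0, y0)) ty))
      (at (x0, y0) within X \<times> Y)"
    by (rule has_derivative_partialsI[OF fx fy fyc]) (auto simp: Y_def \<open>e > 0\<close>)
  moreover have "at (x0, y0) within X \<times> Y = at (x0, y0)"
    by (rule at_within_open) (auto simp: X Y_def \<open>e > 0\<close> open_Times)
  ultimately show ?thesis
    by (simp add: p split_def differential_def[abs_def])
qed

section \<open>Change of variables on \<open>real \<times> real\<close>\<close>

text \<open>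
  The library's change of variables theorem is stated for \<open>real^'n\<close>; the plane \<open>real \<times> real\<close> is
  transported there along the following isometry.
\<close>

definition pair_of_vec :: "real^2 \<Rightarrow> real \<times> real" where
  "pair_of_vec v = (v $ 1, v $ 2)"

definition vec_of_pair :: "real \<times> real \<Rightarrow> real^2" where
  "vec_of_pair p = fst p *\<^sub>R axis 1 1 + snd p *\<^sub>R axis 2 1"

lemma vec_of_pair_nth [simp]: "vec_of_pair p $ 1 = fst p" "vec_of_pair p $ 2 = snd p"
  by (simp_all add: vec_of_pair_def axis_def)

lemma pair_of_vec_of_pair [simp]: "pair_of_vec (vec_of_pair p) = p"
  by (simp add: pair_of_vec_def)

lemma vec_of_pair_of_vec [simp]: "vec_of_pair (pair_of_vec v) = v"
  unfolding vec_eq_iff forall_2 by (simp add: pair_of_vec_def)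

lemma pair_of_vec_axis [simp]: "pair_of_vec (axis 1 1) = (1, 0)" "pair_of_vec (axis 2 1) = (0, 1)"
  by (simp_all add: pair_of_vec_def axis_def)

lemma has_derivative_pair_of_vec [derivative_intros]: "(pair_of_vec has_derivative pair_of_vec) F"
proof -
  have "bounded_linear (\<lambda>v::real^2. (v $ 1, v $ 2))"
    by (intro bounded_linear_Pair bounded_linear_vec_nth)
  then show ?thesis
    unfolding pair_of_vec_def[abs_def] by (rule bounded_linear_imp_has_derivative)
qed

lemma has_derivative_vec_of_pair [derivative_intros]: "(vec_of_pair has_derivative vec_of_pair) F"
  unfolding vec_of_pair_def[abs_def] by (auto intro!: derivative_eq_intros)

lemma continuous_pair_of_vec: "continuous (at v) pair_of_vec"
  using has_derivative_pair_of_vec has_derivative_continuous by blast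

lemma continuous_vec_of_pair: "continuous (at p) vec_of_pair"
  using has_derivative_vec_of_pair has_derivative_continuous by blast

lemma vec_of_pair_cbox: "vec_of_pair ` cbox a b = cbox (vec_of_pair a) (vec_of_pair b)"
proof
  show "vec_of_pair ` cbox a b \<subseteq> cbox (vec_of_pair a) (vec_of_pair b)"
    by (cases a, cases b) (auto simp: mem_box_cart forall_2 cbox_Pair_iff)
  show "cbox (vec_of_pair a) (vec_of_pair b) \<subseteq> vec_of_pair ` cbox a b"
  proof
    fix v assume "v \<in> cbox (vec_of_pair a) (vec_of_pair b)"
    then have "pair_of_vec v \<in> cbox a b"
      by (cases a, cases b) (auto simp: mem_box_cart forall_2 pair_of_vec_def cbox_Pair_iff)
    then show "v \<in> vec_of_pair ` cbox a b" by (metis image_eqI vec_of_pair_of_vec)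
  qed
qed

lemma pair_of_vec_cbox: "pair_of_vec ` cbox u v = cbox (pair_of_vec u) (pair_of_vec v)"
proof -
  have "cbox u v = vec_of_pair ` cbox (pair_of_vec u) (pair_of_vec v)"
    by (simp add: vec_of_pair_cbox)
  then show ?thesis by (simp add: image_image)
qed

lemma content_cbox_2:
  "measure lborel (cbox (u::real^2) v) = measure lborel (cbox (u$1) (v$1)) * measure lborel (cbox (u$2) (v$2))"
proof -
  have ex: "(\<exists>i::2. P i) \<longleftrightarrow> P 1 \<or> P 2" for P using forall_2[of "\<lambda>i. \<not> P i"] by blast
  show ?thesis
    unfolding content_cbox_if_cart[of u v] interval_eq_empty_cart ex cbox_interval[of "u$1"]
      cbox_interval[of "u$2"] content_real_if UNIV_2
    by auto
qed

lemma content_pair_of_vec_cbox: "measure lborel (pair_of_vec ` cbox u v) = measure lborel (cbox u v)"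
proof -
  have "pair_of_vec ` cbox u v = cbox (u$1, u$2) (v$1, v$2)"
    unfolding pair_of_vec_cbox by (simp add: pair_of_vec_def)
  then show ?thesis by (simp add: content_Pair content_cbox_2)
qed

lemma content_vec_of_pair_cbox: "measure lborel (vec_of_pair ` cbox a b) = measure lborel (cbox a b)"
  by (cases a, cases b) (simp add: vec_of_pair_cbox content_cbox_2 content_Pair)

lemma has_integral_twiddle_bounded:
  fixes g :: "'a::euclidean_space \<Rightarrow> 'b::euclidean_space" and F :: "'b \<Rightarrow> 'c::banach"
  assumes "bounded S"
    and hg: "\<And>x. h (g x) = x" and gh: "\<And>y. g (h y) = y"
    and cont: "\<And>x. continuous (at x) g"
    and g_cbox: "\<And>u v. \<exists>w z. g ` cbox u v = cbox w z"
    and h_cbox: "\<And>u v. \<exists>w z. h ` cbox u v = cbox w z"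
    and measure: "\<And>u v. measure lborel (g ` cbox u v) = measure lborel (cbox u v)"
    and F: "(F has_integral i) S"
  shows "((\<lambda>x. F (g x)) has_integral i) (h ` S)"
proof -
  obtain a b where S: "S \<subseteq> cbox a b" using bounded_subset_cbox_symmetric[OF \<open>bounded S\<close>] by blast
  obtain w z where wz: "h ` cbox a b = cbox w z" using h_cbox by blast
  have "((\<lambda>x. if x \<in> S then F x else 0) has_integral i) (cbox a b)"
    using has_integral_restrict[OF S] F by blast
  from has_integral_twiddle[OF _ hg gh cont g_cbox h_cbox _ this, of 1]
  have "((\<lambda>y. if g y \<in> S then F (g y) else 0) has_integral i) (h ` cbox a b)"
    by (simp add: measure)
  moreover have "g y \<in> S \<longleftrightarrow> y \<in> h ` S" for y
    by (metis gh hg image_iff)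
  ultimately have "((\<lambda>y. if y \<in> h ` S then F (g y) else 0) has_integral i) (cbox w z)"
    by (simp add: wz)
  moreover have "h ` S \<subseteq> cbox w z" using S wz by blast
  ultimately show ?thesis using has_integral_restrict by blast
qed

lemma has_integral_vec_of_pair_iff:
  fixes F :: "real \<times> real \<Rightarrow> 'b::banach"
  assumes "bounded S"
  shows "((\<lambda>v. F (pair_of_vec v)) has_integral i) (vec_of_pair ` S) \<longleftrightarrow> (F has_integral i) S"
proof -
  have cbox: "\<exists>w z. vec_of_pair ` cbox a b = cbox w z" "\<exists>w z. pair_of_vec ` cbox u v = cbox w z"
    for a b u v
    using vec_of_pair_cbox pair_of_vec_cbox by blast+
  have "bounded (vec_of_pair ` S)"
    using assms has_derivative_vec_of_pair has_derivative_bounded_linear bounded_linear_image by blast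
  note to_pair = has_integral_twiddle_bounded[OF this _ _ _ cbox(1) cbox(2)]
  note to_vec = has_integral_twiddle_bounded[OF assms _ _ _ cbox(2) cbox(1)]
  show ?thesis
  proof
    assume "((\<lambda>v. F (pair_of_vec v)) has_integral i) (vec_of_pair ` S)"
    then have "((\<lambda>p. F (pair_of_vec (vec_of_pair p))) has_integral i) (pair_of_vec ` vec_of_pair ` S)"
      by (intro to_pair) (simp_all add: continuous_vec_of_pair content_vec_of_pair_cbox)
    then show "(F has_integral i) S" by (simp add: image_image)
  next
    assume "(F has_integral i) S"
    then show "((\<lambda>v. F (pair_of_vec v)) has_integral i) (vec_of_pair ` S)"
      by (intro to_vec) (simp_all add: continuous_pair_of_vec content_pair_of_vec_cbox)
  qed
qed

lemma integral_vec_of_pair: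
  fixes F :: "real \<times> real \<Rightarrow> 'b::banach"
  assumes "bounded S"
  shows "integral (vec_of_pair ` S) (\<lambda>v. F (pair_of_vec v)) = integral S F"
  using has_integral_vec_of_pair_iff[OF assms]
  by (metis integrable_integral integral_unique not_integrable_integral integrable_on_def)

lemma absolutely_integrable_on_compact_continuous:
  fixes F :: "'a::euclidean_space \<Rightarrow> 'b::euclidean_space"
  assumes "compact S" "continuous_on S F"
  shows "F absolutely_integrable_on S"
proof -
  have S: "S \<in> lmeasurable" by (rule lmeasurable_compact[OF assms(1)])
  have "bounded (F ` S)" using compact_continuous_image[OF assms(2,1)] compact_imp_bounded by blast
  then obtain B where B: "\<And>x. x \<in> S \<Longrightarrow> norm (F x) \<le> B" by (auto simp: bounded_iff)
  show ?thesis
    by (rule measurable_bounded_by_integrable_imp_absolutely_integrable[where g = "\<lambda>_. B"])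
      (use S B continuous_imp_measurable_on_sets_lebesgue[OF assms(2)] integrable_on_const[OF S]
        in \<open>auto simp: fmeasurable_def\<close>)
qed

lemma integral_change_of_variables_compact_real:
  fixes g :: "real^'n::{finite,wellorder} \<Rightarrow> real^'n::_" and F :: "real^'n::_ \<Rightarrow> real"
  assumes S: "compact S" and g': "\<And>x. x \<in> S \<Longrightarrow> (g has_derivative g' x) (at x within S)"
    and g: "inj_on g S" and F: "F absolutely_integrable_on g ` S"
  shows "integral S (\<lambda>x. \<bar>det (matrix (g' x))\<bar> * F (g x)) = integral (g ` S) F"
proof -
  define F1 :: "real^'n::_ \<Rightarrow> real^1" where "F1 x = F x *\<^sub>R 1" for x
  have "F1 absolutely_integrable_on g ` S"
    unfolding F1_def using F by (rule absolutely_integrable_scaleR_right)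
  with has_absolute_integral_change_of_variables_compact[OF S g' g, of F1 "integral (g ` S) F1"]
  have "integral S (\<lambda>x. \<bar>det (matrix (g' x))\<bar> *\<^sub>R F1 (g x)) = integral (g ` S) F1"
    by simp
  then have "vec (integral S (\<lambda>x. \<bar>det (matrix (g' x))\<bar> * F (g x))) = vec (integral (g ` S) F)"
    unfolding integral_on_1_eq[of S] integral_on_1_eq[of "g ` S"] by (simp add: F1_def)
  then show ?thesis by simp
qed

lemma det_matrix_differential:
  "det (matrix (\<lambda>w. vec_of_pair (differential k p (pair_of_vec w)))) = jac k p"
  by (simp add: det_2 matrix_def differential_def jac_def)

lemma integral_change_of_variables_smooth:
  fixes k :: "real \<times> real \<Rightarrow> real \<times> real" and F :: "real \<times> real \<Rightarrow> real"
  assumes k: "smooth_on_open U k" "S \<subseteq> U" and "compact S" "inj_on k S"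
    and F: "continuous_on (k ` S) F"
  shows "integral S (\<lambda>p. \<bar>jac k p\<bar> * F (k p)) = integral (k ` S) F"
proof -
  define G where "G v = vec_of_pair (k (pair_of_vec v))" for v
  define G' where "G' v w = vec_of_pair (differential k (pair_of_vec v) (pair_of_vec w))" for v w
  define T where "T = vec_of_pair ` S"
  have compact_image_vec_of_pair: "compact (vec_of_pair ` X)" if "compact X" for X
    using that compact_continuous_image continuous_at_imp_continuous_on continuous_vec_of_pair by blast
  have "continuous_on S k"
    using smooth_on_open_continuous_on[OF k(1)] k(2) continuous_on_subset by blast
  then have kS: "compact (k ` S)" using \<open>compact S\<close> compact_continuous_image by blast
  have T: "compact T" unfolding T_def by (rule compact_image_vec_of_pair[OF \<open>compact S\<close>])
  have G': "(G has_derivative G' v) (at v within T)" if "v \<in> T" for v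
  proof -
    have "pair_of_vec v \<in> U" using that k(2) by (auto simp: T_def)
    from smooth_on_open_has_derivative[OF k(1) this]
    have "((\<lambda>v. k (pair_of_vec v)) has_derivative (\<lambda>w. differential k (pair_of_vec v) (pair_of_vec w))) (at v)"
      by (rule has_derivative_compose[OF has_derivative_pair_of_vec])
    from has_derivative_compose[OF this has_derivative_vec_of_pair]
    show ?thesis unfolding G_def[abs_def] G'_def[abs_def] by (rule has_derivative_at_withinI)
  qed
  have G: "inj_on G T"
  proof (rule inj_onI)
    fix v w assume "v \<in> T" "w \<in> T" "G v = G w"
    then have "k (pair_of_vec v) = k (pair_of_vec w)" "pair_of_vec v \<in> S" "pair_of_vec w \<in> S"
      unfolding G_def T_def by (metis pair_of_vec_of_pair, auto)
    then have "pair_of_vec v = pair_of_vec w" using \<open>inj_on k S\<close> by (simp add: inj_on_eq_iff)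
    then show "v = w" by (metis vec_of_pair_of_vec)
  qed
  have GT: "G ` T = vec_of_pair ` k ` S"
    by (simp add: G_def T_def image_image)
  have "continuous_on (vec_of_pair ` k ` S) (\<lambda>v. F (pair_of_vec v))"
    by (rule continuous_on_compose2[OF F])
      (auto simp: image_image intro: continuous_at_imp_continuous_on continuous_pair_of_vec)
  then have "(\<lambda>v. F (pair_of_vec v)) absolutely_integrable_on G ` T"
    unfolding GT by (intro absolutely_integrable_on_compact_continuous compact_image_vec_of_pair kS)
  from integral_change_of_variables_compact_real[OF T G' G this]
  have "integral T (\<lambda>v. \<bar>det (matrix (G' v))\<bar> * F (pair_of_vec (G v)))
      = integral (vec_of_pair ` k ` S) (\<lambda>v. F (pair_of_vec v))"
    unfolding GT .
  then have "integral T (\<lambda>v. \<bar>jac k (pair_of_vec v)\<bar> * F (k (pair_of_vec v)))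
      = integral (vec_of_pair ` k ` S) (\<lambda>v. F (pair_of_vec v))"
    by (simp add: G_def G'_def[abs_def] det_matrix_differential)
  then show ?thesis
    using integral_vec_of_pair[OF compact_imp_bounded[OF \<open>compact S\<close>], of "\<lambda>p. \<bar>jac k p\<bar> * F (k p)"]
      integral_vec_of_pair[OF compact_imp_bounded[OF kS], of F]
    by (simp add: T_def)
qed

section \<open>The sublevel set \<open>A\<close> and its components\<close>

lemma g_eq: "g p = ((fst p)\<^sup>2 + (snd p)\<^sup>2 + 1)\<^sup>2 - 4 * (fst p)\<^sup>2"
  by (simp add: g_def power2_eq_square algebra_simps)

lemma g_nonneg: "0 \<le> g p"
  by (simp add: g_def)

lemma g_hrot: "g (hrot p) = g p"
  by (simp add: g_def hrot_def power2_eq_square algebra_simps)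

lemma D_subset_cball: "D \<subseteq> cball 0 2"
proof
  fix p assume "p \<in> D"
  obtain x y where p: "p = (x, y)" by (cases p)
  have "(x\<^sup>2 + y\<^sup>2 + 1)\<^sup>2 - 4 * x\<^sup>2 \<le> 2" using \<open>p \<in> D\<close> by (simp add: D_def g_eq p)
  moreover have "(x\<^sup>2 + y\<^sup>2 - 1)\<^sup>2 \<le> (x\<^sup>2 + y\<^sup>2 + 1)\<^sup>2 - 4 * x\<^sup>2"
    by (simp add: power2_eq_square algebra_simps)
  ultimately have "(x\<^sup>2 + y\<^sup>2 - 1)\<^sup>2 \<le> 3\<^sup>2" by simp
  then have "\<bar>x\<^sup>2 + y\<^sup>2 - 1\<bar> \<le> \<bar>3\<bar>" by (simp only: abs_le_square_iff)
  then have "x\<^sup>2 + y\<^sup>2 \<le> 2\<^sup>2" by simp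
  then have "sqrt (x\<^sup>2 + y\<^sup>2) \<le> sqrt (2\<^sup>2)" by (rule real_sqrt_le_mono)
  then show "p \<in> cball 0 2" by (simp add: p norm_Pair)
qed

lemma A_eq: "A = {p. g p \<le> 1/2}"
  by (auto simp: A_def D_def f_def g_nonneg)

lemma A_subset_D: "A \<subseteq> D"
  by (auto simp: A_def)

lemma compact_A: "compact A"
proof -
  have "bounded A" using A_subset_D D_subset_cball bounded_cball bounded_subset by blast
  moreover have "closed A" unfolding A_eq g_def by (intro closed_Collect_le continuous_intros)
  ultimately show ?thesis by (simp add: compact_eq_bounded_closed)
qed

lemma compact_connected_component_A: "compact (connected_component_set A p)"
  using compact_A closed_connected_component connected_component_subset
  by (metis bounded_subset compact_eq_bounded_closed)

lemma A1_subset_A: "A1 \<subseteq> A" and A2_subset_A: "A2 \<subseteq> A"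
  by (simp_all add: A1_def A2_def connected_component_subset)

lemma in_A1: "(-1, 0) \<in> A1" and in_A2: "(1, 0) \<in> A2"
  by (simp_all add: A1_def A2_def A_eq g_def)

lemma closed_segment_subset_D: "closed_segment (-1, 0) (1, 0) \<subseteq> D"
proof
  fix p assume "p \<in> closed_segment ((-1::real), (0::real)) (1, 0)"
  then obtain x :: real where x: "\<bar>x\<bar> \<le> 1" "p = (x, 0)"
    by (force simp: in_segment algebra_simps)
  then have "\<bar>x\<^sup>2 - 1\<bar> \<le> 1" by (simp add: abs_le_iff abs_square_le_1)
  then have "(x\<^sup>2 - 1)\<^sup>2 \<le> 1" by (simp only: abs_square_le_1)
  moreover have "g p = (x\<^sup>2 - 1)\<^sup>2" by (simp add: x g_def power2_eq_square algebra_simps)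
  ultimately show "p \<in> D" by (simp add: D_def g_nonneg)
qed

lemma connected_component_A_image_subset:
  assumes "continuous_on D k" "\<forall>q\<in>D. k q \<in> D \<and> f (k q) = f q" "p \<in> A"
  shows "k ` connected_component_set A p \<subseteq> connected_component_set A (k p)"
proof (rule connected_component_maximal)
  show "k p \<in> k ` connected_component_set A p" using \<open>p \<in> A\<close> by simp
  show "connected (k ` connected_component_set A p)"
    using assms(1) A_subset_D connected_component_subset
    by (metis connected_connected_component connected_continuous_image continuous_on_subset order.trans)
  show "k ` connected_component_set A p \<subseteq> A"
    using assms(2) connected_component_subset[of A p] by (auto simp: A_def)
qed

lemma S_f_image_connected_component_A:
  assumes "k \<in> S_f" "p \<in> A"
  shows "k ` connected_component_set A p = connected_component_set A (k p)"
proof -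
  obtain k' where k: "smooth_on_D k" "\<forall>q\<in>D. k q \<in> D \<and> f (k q) = f q"
    and k': "smooth_on_D k'" "\<forall>q\<in>D. k' q \<in> D \<and> k' (k q) = q \<and> k (k' q) = q"
    using assms(1) unfolding S_f_def Diff_D_def by blast
  have "\<forall>q\<in>D. k' q \<in> D \<and> f (k' q) = f q" using k k' by metis
  note k'_image = connected_component_A_image_subset[OF smooth_on_D_continuous_on[OF k'(1)] this]
  have kp: "k p \<in> A" using k assms(2) A_subset_D by (auto simp: A_def)
  have "connected_component_set A (k p) \<subseteq> k ` connected_component_set A p"
  proof
    fix q assume q: "q \<in> connected_component_set A (k p)"
    have "k' q \<in> connected_component_set A (k' (k p))" using k'_image[OF kp] q by blast
    moreover have "k' (k p) = p" "k (k' q) = q"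
      using k' assms(2) q A_subset_D connected_component_subset by blast+
    ultimately show "q \<in> k ` connected_component_set A p" by (metis image_eqI)
  qed
  then show ?thesis
    using connected_component_A_image_subset[OF smooth_on_D_continuous_on[OF k(1)] k(2) assms(2)]
    by blast
qed

lemma same_component_S_plus_connected_component_A:
  assumes "same_component_S_plus h k" "p \<in> A"
  shows "k p \<in> connected_component_set A (h p)"
proof -
  obtain H :: "real \<Rightarrow> real \<times> real \<Rightarrow> real \<times> real"
    where H: "\<forall>t\<in>{0..1}. H t \<in> S_plus" "\<forall>q\<in>D. H 0 q = h q \<and> H 1 q = k q"
    and H_cont: "\<forall>\<alpha>. continuous_on ({0..1} \<times> D) (\<lambda>(t, q). iter_partial \<alpha> (H t) q)"
    using assms(1) unfolding same_component_S_plus_def by blast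
  have cH: "continuous_on ({0..1} \<times> D) (\<lambda>(t, q). H t q)"
    using H_cont[rule_format, of "[]"] by simp
  have pD: "p \<in> D" using assms(2) A_subset_D by blast
  have "continuous_on {0..1} (\<lambda>t::real. (t, p))" by (intro continuous_intros)
  from continuous_on_compose2[OF cH this]
  have "continuous_on {0..1} (\<lambda>t. H t p)" using pD by auto
  then have "connected ((\<lambda>t. H t p) ` {0..1})" by (rule connected_continuous_image) simp
  moreover have "H t p \<in> A" if "t \<in> {0..1}" for t
  proof -
    have "H t p \<in> D \<and> f (H t p) = f p"
      using H(1) that pD unfolding S_plus_def S_f_def Diff_D_def by blast
    then show ?thesis using assms(2) by (simp add: A_def)
  qed
  moreover have "h p \<in> (\<lambda>t. H t p) ` {0..1}" "k p \<in> (\<lambda>t. H t p) ` {0..1}"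
    using H(2) pD by (force intro: image_eqI[of _ _ 0], force intro: image_eqI[of _ _ 1])
  ultimately have "(\<lambda>t. H t p) ` {0..1} \<subseteq> connected_component_set A (h p)"
    by (intro connected_component_maximal) auto
  then show ?thesis using \<open>k p \<in> (\<lambda>t. H t p) ` {0..1}\<close> by blast
qed

section \<open>Symmetries of \<open>f\<close> and the volume of \<open>A\<^sub>1\<close> and \<open>A\<^sub>2\<close>\<close>

lemma partial_hrot: "partial b hrot = (\<lambda>p. - dir b)"
proof
  fix p
  have "hrot (p + t *\<^sub>R dir b) = hrot p + t *\<^sub>R (- dir b)" for t
    by (simp add: hrot_def dir_def)
  then show "partial b hrot p = - dir b"
    unfolding partial_def by (intro vector_derivative_at) (auto intro!: derivative_eq_intros)
qed

lemma iter_partial_hrot: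
  "iter_partial \<alpha> hrot = hrot \<or> (\<exists>c. iter_partial \<alpha> hrot = (\<lambda>p. c))"
proof (induction \<alpha>)
  case Nil then show ?case by simp
next
  case (Cons b \<alpha>)
  have "partial b (\<lambda>p. c) = (\<lambda>p. 0)" for c :: "real \<times> real"
    by (rule ext) (simp add: partial_def)
  then show ?case using Cons by (metis iter_partial.simps(2) partial_hrot)
qed

lemma hrot_in_S_plus: "hrot \<in> S_plus"
proof -
  have "smooth_on_open UNIV hrot"
    unfolding smooth_on_open_def
  proof (intro conjI allI ballI)
    fix \<alpha> :: "bool list" and b p
    show "continuous_on UNIV (iter_partial \<alpha> hrot)"
      using iter_partial_hrot[of \<alpha>] by (auto simp: hrot_def[abs_def] intro!: continuous_intros)
    show "(\<lambda>t. iter_partial \<alpha> hrot (p + t *\<^sub>R dir b)) differentiable at 0"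
      using iter_partial_hrot[of \<alpha>] by (auto simp: hrot_def[abs_def] intro!: derivative_intros)
  qed simp
  moreover have "\<forall>p\<in>D. hrot p \<in> D" by (simp add: D_def g_hrot)
  moreover have "hrot (hrot p) = p" for p by (simp add: hrot_def)
  ultimately have "hrot \<in> Diff_D" unfolding Diff_D_def smooth_on_D_def by blast
  moreover have "jac hrot p = 1" for p
    by (simp add: jac_def partial_hrot dir_def)
  ultimately show ?thesis by (simp add: S_plus_def S_f_def f_def g_hrot)
qed

lemma volume_form_continuous_on: "volume_form \<rho> \<Longrightarrow> continuous_on D \<rho>"
  by (simp add: volume_form_def smooth_on_D_continuous_on)

lemma connected_nonvanishing_same_sign:
  fixes \<rho> :: "'a::topological_space \<Rightarrow> real"
  assumes "connected S" "continuous_on S \<rho>" "\<forall>x\<in>S. \<rho> x \<noteq> 0" "p \<in> S" "q \<in> S"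
  shows "0 < \<rho> p * \<rho> q"
proof -
  have conn: "connected (\<rho> ` S)" using assms(1,2) connected_continuous_image by blast
  have "\<rho> p \<in> \<rho> ` S" "\<rho> q \<in> \<rho> ` S" using assms(4,5) by simp_all
  then have "{\<rho> p..\<rho> q} \<subseteq> \<rho> ` S" "{\<rho> q..\<rho> p} \<subseteq> \<rho> ` S"
    using connected_contains_Icc[OF conn] by simp_all
  moreover have "0 \<notin> \<rho> ` S" using assms(3) by auto
  ultimately have "\<not> (\<rho> p \<le> 0 \<and> 0 \<le> \<rho> q)" "\<not> (\<rho> q \<le> 0 \<and> 0 \<le> \<rho> p)"
    by auto
  then show ?thesis by (auto simp: zero_less_mult_iff)
qed

lemma connected_A1_segment_A2: "connected (A1 \<union> closed_segment (-1, 0) (1, 0) \<union> A2)"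
proof -
  have "connected A1" "connected A2" by (simp_all add: A1_def A2_def)
  have "(-1, 0) \<in> A1 \<inter> closed_segment (-1, 0) (1, 0)" using in_A1 by simp
  then have "connected (A1 \<union> closed_segment (-1, 0) (1, 0))"
    using connected_Un[OF \<open>connected A1\<close> connected_segment] by blast
  moreover have "(1, 0) \<in> (A1 \<union> closed_segment (-1, 0) (1, 0)) \<inter> A2" using in_A2 by simp
  ultimately show ?thesis using connected_Un \<open>connected A2\<close> by blast
qed

lemma volume_form_same_sign_A1_A2:
  assumes "volume_form \<rho>" "p \<in> A1" "q \<in> A2"
  shows "0 < \<rho> p * \<rho> q"
proof (rule connected_nonvanishing_same_sign[OF connected_A1_segment_A2])
  have "A1 \<union> closed_segment (-1, 0) (1, 0) \<union> A2 \<subseteq> D"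
    using A1_subset_A A2_subset_A A_subset_D closed_segment_subset_D by blast
  then show "continuous_on (A1 \<union> closed_segment (-1, 0) (1, 0) \<union> A2) \<rho>"
    "\<forall>x\<in>A1 \<union> closed_segment (-1, 0) (1, 0) \<union> A2. \<rho> x \<noteq> 0"
    using continuous_on_subset[OF volume_form_continuous_on[OF assms(1)]] assms(1)
    by (auto simp: volume_form_def)
qed (use assms(2,3) in auto)

lemma isotopic_to_hrot_image_A1:
  assumes "k \<in> S_f" "same_component_S_plus hrot k"
  shows "k ` A1 = A2"
proof -
  have "(-1, 0) \<in> A" using in_A1 A1_subset_A by blast
  have "k (-1, 0) \<in> connected_component_set A (hrot (-1, 0))"
    by (rule same_component_S_plus_connected_component_A[OF assms(2) \<open>(-1, 0) \<in> A\<close>])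
  then have "connected_component_set A (k (-1, 0)) = A2"
    unfolding A2_def hrot_def by (simp add: connected_component_eq)
  then show ?thesis
    using S_f_image_connected_component_A[OF assms(1) \<open>(-1, 0) \<in> A\<close>] by (simp add: A1_def)
qed

lemma S_f_omega_abs_jac_A1:
  assumes \<rho>: "volume_form \<rho>" and k: "k \<in> S_f_omega \<rho>" "k ` A1 = A2" and "p \<in> A1"
  shows "\<bar>jac k p\<bar> * \<rho> (k p) = \<rho> p"
proof -
  have "p \<in> D" using \<open>p \<in> A1\<close> A1_subset_A A_subset_D by blast
  then have pull: "\<rho> (k p) * jac k p = \<rho> p" using k by (auto simp: S_f_omega_def)
  have "0 < \<rho> p * \<rho> (k p)" using volume_form_same_sign_A1_A2[OF \<rho> \<open>p \<in> A1\<close>] k(2) \<open>p \<in> A1\<close> by blast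
  also have "\<rho> p * \<rho> (k p) = (\<rho> (k p))\<^sup>2 * jac k p" by (simp add: pull[symmetric] power2_eq_square)
  finally have "0 < jac k p" by (simp add: zero_less_mult_iff)
  then show ?thesis using pull by (simp add: mult.commute)
qed

lemma vol_A1_eq_vol_A2_if_isotopic:
  assumes \<rho>: "volume_form \<rho>" and k: "k \<in> S_f_omega \<rho>" and "same_component_S_plus hrot k"
  shows "vol \<rho> A1 = vol \<rho> A2"
proof -
  have "k \<in> S_f" using k by (simp add: S_f_omega_def)
  then obtain k' where "smooth_on_D k" and k': "\<forall>p\<in>D. k' (k p) = p"
    unfolding S_f_def Diff_D_def by blast
  then obtain U where "D \<subseteq> U" "smooth_on_open U k" using smooth_on_D_def by blast
  have image: "k ` A1 = A2" using isotopic_to_hrot_image_A1[OF \<open>k \<in> S_f\<close> assms(3)] .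
  have A1D: "A1 \<subseteq> D" using A1_subset_A A_subset_D by blast
  have "vol \<rho> A2 = integral (k ` A1) \<rho>" by (simp add: vol_def image)
  also have "\<dots> = integral A1 (\<lambda>p. \<bar>jac k p\<bar> * \<rho> (k p))"
  proof (rule integral_change_of_variables_smooth[symmetric, OF \<open>smooth_on_open U k\<close>])
    show "A1 \<subseteq> U" using \<open>D \<subseteq> U\<close> A1D by blast
    show "compact A1" unfolding A1_def by (rule compact_connected_component_A)
    show "inj_on k A1" using k' A1D by (metis inj_onI subsetD)
    from volume_form_continuous_on[OF \<rho>] show "continuous_on (k ` A1) \<rho>"
      unfolding image using A2_subset_A A_subset_D continuous_on_subset by blast
  qed
  also have "\<dots> = vol \<rho> A1"
    unfolding vol_def by (rule integral_cong) (simp add: S_f_omega_abs_jac_A1[OF \<rho> k image])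
  finally show ?thesis by simp
qed

theorem lemma3p5:
  fixes \<rho> :: "real \<times> real \<Rightarrow> real"
  assumes "volume_form \<rho>"
    and "vol \<rho> A1 \<noteq> vol \<rho> A2"
  shows "hrot \<in> S_plus \<and> \<not> (\<exists>k \<in> S_f_omega \<rho>. same_component_S_plus hrot k)"
  using hrot_in_S_plus vol_A1_eq_vol_A2_if_isotopic[OF assms(1)] assms(2) by blast

end
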